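(* Let $k\ge1$ and let $G\in\mathfrak A$ be a graph containing no subgraph isomorphic to $\Gamma_{k+1}$. Then $G$ has the $\Gamma_k$-twin property.
   Context: $\mathfrak A$ is the class of maximal triangle-free graphs with at least two vertices containing no induced cycle of length six. (Maximal triangle-free: no triangle, and adding any new edge creates a triangle.) Andrásfai graph $\Gamma_k$: vertex set $\mathbb Z/(3k-1)\mathbb Z$, $ij$ an edge iff $i-j\in\{k,\dots,2k-1\}$ mod $3k-1$. For a subgraph $H$ of $G$, $q\in V(H)$, $q'\in V(G)$, $q'$ is an $H$-twin of $q$ if $\mathrm N(q)\cap V(H)=\mathrm N(q')\cap V(H)$ (neighbourhoods in $G$). For graphs $F,G$, $G$ has the $F$-twin property if for every $e\in E(F)$: whenever $H\subseteq G$ is isomorphic to $F$, $qz\in E(H)$ corresponds to $e$, and $q',z'$ are $H$-twins of $q,z$, then $q'z'\in E(G)$. *)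

theory Defs
  imports Main
begin

definition graph :: "'a set \<Rightarrow> ('a \<Rightarrow> 'a \<Rightarrow> bool) \<Rightarrow> bool" where
  "graph V E \<longleftrightarrow> finite V \<and> (\<forall>x y. E x y \<longrightarrow> x \<in> V \<and> y \<in> V)
     \<and> (\<forall>x y. E x y \<longrightarrow> E y x) \<and> (\<forall>x. \<not> E x x)"

definition triangle_free :: "'a set \<Rightarrow> ('a \<Rightarrow> 'a \<Rightarrow> bool) \<Rightarrow> bool" where
  "triangle_free V E \<longleftrightarrow>
     \<not> (\<exists>x\<in>V. \<exists>y\<in>V. \<exists>z\<in>V. E x y \<and> E y z \<and> E x z)"

definition add_edge :: "('a \<Rightarrow> 'a \<Rightarrow> bool) \<Rightarrow> 'a \<Rightarrow> 'a \<Rightarrow> ('a \<Rightarrow> 'a \<Rightarrow> bool)" where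
  "add_edge E x y = (\<lambda>a b. E a b \<or> (a = x \<and> b = y) \<or> (a = y \<and> b = x))"

definition maximal_triangle_free :: "'a set \<Rightarrow> ('a \<Rightarrow> 'a \<Rightarrow> bool) \<Rightarrow> bool" where
  "maximal_triangle_free V E \<longleftrightarrow> triangle_free V E \<and>
     (\<forall>x\<in>V. \<forall>y\<in>V. x \<noteq> y \<longrightarrow> \<not> E x y \<longrightarrow> \<not> triangle_free V (add_edge E x y))"

definition has_induced_C6 :: "'a set \<Rightarrow> ('a \<Rightarrow> 'a \<Rightarrow> bool) \<Rightarrow> bool" where
  "has_induced_C6 V E \<longleftrightarrow> (\<exists>f :: nat \<Rightarrow> 'a. inj_on f {0..<6} \<and> f ` {0..<6} \<subseteq> V \<and>
     (\<forall>i<6. \<forall>j<6. E (f i) (f j) \<longleftrightarrow> (i + 1) mod 6 = j \<or> (j + 1) mod 6 = i))"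

definition classA :: "'a set \<Rightarrow> ('a \<Rightarrow> 'a \<Rightarrow> bool) \<Rightarrow> bool" where
  "classA V E \<longleftrightarrow> graph V E \<and> card V \<ge> 2 \<and> maximal_triangle_free V E \<and> \<not> has_induced_C6 V E"

text \<open>Andrasfai graph \<open>\<Gamma>\<^sub>k\<close> on \<open>\<int>/(3k-1)\<close>, vertices represented by 0..3k-2.\<close>
definition andrasfai_V :: "nat \<Rightarrow> nat set" where
  "andrasfai_V k = {0..<3*k-1}"

definition andrasfai_E :: "nat \<Rightarrow> nat \<Rightarrow> nat \<Rightarrow> bool" where
  "andrasfai_E k i j \<longleftrightarrow> i \<in> andrasfai_V k \<and> j \<in> andrasfai_V k \<and>
     (int i - int j) mod int (3*k-1) \<in> {int k .. int (2*k-1)}"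

text \<open>An embedding of F into G, i.e. G has a (not necessarily induced) subgraph
  isomorphic to F, namely the image of the embedding.\<close>
definition embedding :: "'b set \<Rightarrow> ('b \<Rightarrow> 'b \<Rightarrow> bool) \<Rightarrow> 'a set \<Rightarrow> ('a \<Rightarrow> 'a \<Rightarrow> bool) \<Rightarrow> ('b \<Rightarrow> 'a) \<Rightarrow> bool" where
  "embedding VF EF VG EG \<phi> \<longleftrightarrow> inj_on \<phi> VF \<and> \<phi> ` VF \<subseteq> VG \<and>
     (\<forall>a\<in>VF. \<forall>b\<in>VF. EF a b \<longrightarrow> EG (\<phi> a) (\<phi> b))"

definition contains_subgraph :: "'a set \<Rightarrow> ('a \<Rightarrow> 'a \<Rightarrow> bool) \<Rightarrow> 'b set \<Rightarrow> ('b \<Rightarrow> 'b \<Rightarrow> bool) \<Rightarrow> bool" where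
  "contains_subgraph VG EG VF EF \<longleftrightarrow> (\<exists>\<phi>. embedding VF EF VG EG \<phi>)"

definition twin :: "('a \<Rightarrow> 'a \<Rightarrow> bool) \<Rightarrow> 'a set \<Rightarrow> 'a \<Rightarrow> 'a \<Rightarrow> bool" where
  "twin EG W q q' \<longleftrightarrow> {x. EG q x} \<inter> W = {x. EG q' x} \<inter> W"

definition twin_property :: "'b set \<Rightarrow> ('b \<Rightarrow> 'b \<Rightarrow> bool) \<Rightarrow> 'a set \<Rightarrow> ('a \<Rightarrow> 'a \<Rightarrow> bool) \<Rightarrow> bool" where
  "twin_property VF EF VG EG \<longleftrightarrow>
     (\<forall>a\<in>VF. \<forall>b\<in>VF. EF a b \<longrightarrow>
       (\<forall>\<phi>. embedding VF EF VG EG \<phi> \<longrightarrow>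
         (\<forall>q'\<in>VG. \<forall>z'\<in>VG. twin EG (\<phi> ` VF) (\<phi> a) q' \<longrightarrow> twin EG (\<phi> ` VF) (\<phi> b) z'
            \<longrightarrow> EG q' z')))"

end

theory Submission
  imports Defs "HOL-Number_Theory.Cong"
begin

text \<open>A copy of \<open>\<Gamma>\<^sub>k\<close> in a triangle-free graph is induced, because any two
  non-adjacent vertices of \<open>\<Gamma>\<^sub>k\<close> have a common neighbour. Rotating \<open>\<Gamma>\<^sub>k\<close>, the edge
  may be taken to be \<open>0d\<close> with \<open>k \<le> d \<le> 2k-1\<close>, and after swapping its ends either
  \<open>d = 2k-1\<close> or \<open>d > k\<close>. Let \<open>q\<close> and \<open>z\<close> be twins of \<open>0\<close> and \<open>d\<close>, and suppose they are not
  adjacent. If one of them lies on the copy, adjacency is immediate; otherwise maximality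
  yields a common neighbour \<open>w\<close> off the copy. Since there is no induced six-cycle through
  \<open>q, w, z\<close>, the vertex \<open>w\<close> is adjacent to many vertices of the copy: for \<open>k < d < 2k-1\<close> to
  both ends of an edge, a triangle, and for \<open>d = 2k-1\<close> to all of \<open>2k, \<dots>, 3k-2\<close>, so that
  \<open>q, z, w\<close> extend the copy to a copy of \<open>\<Gamma>\<^bsub>k+1\<^esub>\<close>.\<close>

section \<open>Andrasfai graphs\<close>

lemma andrasfai_E_iff:
  "andrasfai_E k i j \<longleftrightarrow> i + 1 < 3*k \<and> j + 1 < 3*k \<and>
     (j + k \<le> i \<and> i < j + 2*k \<or> i + k \<le> j \<and> j < i + 2*k)"
proof (cases "i < 3*k-1 \<and> j < 3*k-1")
  case False
  then show ?thesis by (auto simp: andrasfai_E_def andrasfai_V_def)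
next
  case True
  show ?thesis
  proof (cases "j \<le> i")
    case le: True
    have "(int i - int j) mod int (3*k-1) = int i - int j"
      using True le by (intro mod_pos_pos_trivial) auto
    then show ?thesis using True le by (auto simp: andrasfai_E_def andrasfai_V_def)
  next
    case gt: False
    have "(int i - int j) mod int (3*k-1) = (int i - int j + int (3*k-1)) mod int (3*k-1)"
      by simp
    also have "\<dots> = int i - int j + int (3*k-1)"
      using True gt by (intro mod_pos_pos_trivial) auto
    finally show ?thesis using True gt by (auto simp: andrasfai_E_def andrasfai_V_def)
  qed
qed

lemma andrasfai_E_sym: "andrasfai_E k i j \<longleftrightarrow> andrasfai_E k j i"
  unfolding andrasfai_E_iff by auto

lemma andrasfai_E_irrefl: "\<not> andrasfai_E k i i"
  unfolding andrasfai_E_iff by auto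

lemma andrasfai_E_less: "andrasfai_E k i j \<Longrightarrow> i < 3*k-1 \<and> j < 3*k-1"
  unfolding andrasfai_E_iff by auto

lemma andrasfai_common_neighbour:
  assumes "i \<in> andrasfai_V k" "j \<in> andrasfai_V k" "i \<noteq> j" "\<not> andrasfai_E k i j"
  shows "\<exists>m\<in>andrasfai_V k. andrasfai_E k i m \<and> andrasfai_E k j m"
proof -
  have ordered: "\<exists>m. andrasfai_E k i m \<and> andrasfai_E k j m"
    if "i < j" "j + 1 < 3*k" "\<not> andrasfai_E k i j" for i j
  proof -
    have "j < i + k \<or> i + 2*k \<le> j" using that by (simp add: andrasfai_E_iff) linarith
    then consider "j < i + k" "j + k + 1 < 3*k" | "j < i + k" "3*k \<le> j + k + 1" | "i + 2*k \<le> j"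
      by linarith
    then show ?thesis
    proof cases
      case 1
      then show ?thesis using that by (intro exI[of _ "j + k"]) (simp add: andrasfai_E_iff)
    next
      case 2
      then show ?thesis using that
        by (intro exI[of _ "j + k + 1 - 3*k"]) (simp add: andrasfai_E_iff, linarith)
    next
      case 3
      then show ?thesis using that by (intro exI[of _ "i + k"]) (simp add: andrasfai_E_iff)
    qed
  qed
  have "\<exists>m. andrasfai_E k i m \<and> andrasfai_E k j m"
  proof (cases "i < j")
    case True
    then show ?thesis using ordered assms by (auto simp: andrasfai_V_def)
  next
    case False
    then have "j < i" "i + 1 < 3*k" "\<not> andrasfai_E k j i"
      using assms andrasfai_E_sym by (auto simp: andrasfai_V_def)
    then show ?thesis using ordered[of j i] andrasfai_E_sym by blast
  qed
  then show ?thesis using andrasfai_E_less by (auto simp: andrasfai_V_def)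
qed

lemma andrasfai_E_rotate:
  assumes "i < 3*k-1" "j < 3*k-1"
  shows "andrasfai_E k ((i + c) mod (3*k-1)) ((j + c) mod (3*k-1)) \<longleftrightarrow> andrasfai_E k i j"
proof -
  have "(int ((i + c) mod (3*k-1)) - int ((j + c) mod (3*k-1))) mod int (3*k-1)
      = (int i - int j) mod int (3*k-1)"
    by (simp only: of_nat_mod of_nat_add mod_diff_eq) simp
  then show ?thesis using assms by (simp add: andrasfai_E_def andrasfai_V_def)
qed

lemma bij_betw_add_mod: "bij_betw (\<lambda>i. (i + c) mod n) {0..<n} {0..<n::nat}"
proof -
  have inj: "inj_on (\<lambda>i. (i + c) mod n) {0..<n}"
  proof (rule inj_onI)
    fix x y assume "x \<in> {0..<n}" "y \<in> {0..<n}" "(x + c) mod n = (y + c) mod n"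
    then show "x = y"
      by (auto simp: cong_add_rcancel_nat intro: cong_less_modulus_unique_nat simp flip: cong_def)
  qed
  moreover have "(\<lambda>i. (i + c) mod n) ` {0..<n} = {0..<n}"
    by (rule endo_inj_surj[OF _ _ inj]) auto
  ultimately show ?thesis by (simp add: bij_betw_def)
qed
lemma embedding_comp_automorphism:
  assumes emb: "embedding VF EF VG EG \<phi>" and bij: "bij_betw \<sigma> VF VF"
    and hom: "\<And>a b. a \<in> VF \<Longrightarrow> b \<in> VF \<Longrightarrow> EF a b \<Longrightarrow> EF (\<sigma> a) (\<sigma> b)"
  shows "embedding VF EF VG EG (\<phi> \<circ> \<sigma>)" and "(\<phi> \<circ> \<sigma>) ` VF = \<phi> ` VF"
proof -
  have img: "\<sigma> ` VF = VF" using bij by (simp add: bij_betw_def)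
  then show "(\<phi> \<circ> \<sigma>) ` VF = \<phi> ` VF" by (metis image_comp)
  have "inj_on (\<phi> \<circ> \<sigma>) VF"
    using emb bij img by (intro comp_inj_on) (auto simp: embedding_def bij_betw_def)
  moreover have "\<sigma> a \<in> VF" if "a \<in> VF" for a using img that by blast
  ultimately show "embedding VF EF VG EG (\<phi> \<circ> \<sigma>)"
    using emb hom by (simp add: embedding_def image_subset_iff)
qed

lemma embedding_andrasfai_rotate:
  assumes "embedding (andrasfai_V k) (andrasfai_E k) V E \<phi>"
  shows "embedding (andrasfai_V k) (andrasfai_E k) V E (\<lambda>i. \<phi> ((i + c) mod (3*k-1)))"
    and "(\<lambda>i. \<phi> ((i + c) mod (3*k-1))) ` andrasfai_V k = \<phi> ` andrasfai_V k"
  using embedding_comp_automorphism[OF assms, of "\<lambda>i. (i + c) mod (3*k-1)"]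
    bij_betw_add_mod andrasfai_E_rotate andrasfai_E_less
  by (auto simp: andrasfai_V_def o_def)

lemma mod_add_diff_mod_cancel:
  assumes "a < n" "b < (n::nat)"
  shows "((b + n - a) mod n + a) mod n = b"
proof -
  have "((b + n - a) mod n + a) mod n = (b + n - a + a) mod n" by (simp only: mod_add_left_eq)
  also have "b + n - a + a = b + n" using assms(1) by simp
  finally show ?thesis using assms(2) by simp
qed

lemma add_diff_mod_add_diff_mod:
  assumes "a < n" "b < n" "a \<noteq> (b::nat)"
  shows "(b + n - a) mod n + (a + n - b) mod n = n"
proof (cases "a < b")
  case True
  then have "(b + n - a) mod n = b - a" "(a + n - b) mod n = a + n - b"
    using assms by (simp_all add: le_mod_geq)
  then show ?thesis using True assms by arith
next
  case False
  then have "(b + n - a) mod n = b + n - a" "(a + n - b) mod n = a - b"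
    using assms by (simp_all add: le_mod_geq)
  then show ?thesis using False assms by simp
qed

text \<open>The rotation distance \<open>(b - a) mod (3k-1)\<close>, written without truncated subtraction.\<close>

definition andrasfai_dist :: "nat \<Rightarrow> nat \<Rightarrow> nat \<Rightarrow> nat" where
  "andrasfai_dist k a b = (b + (3*k-1) - a) mod (3*k-1)"

lemma andrasfai_dist_add:
  "andrasfai_E k a b \<Longrightarrow> (andrasfai_dist k a b + a) mod (3*k-1) = b"
  unfolding andrasfai_dist_def using mod_add_diff_mod_cancel andrasfai_E_less by blast

lemma andrasfai_E_0_dist:
  assumes "andrasfai_E k a b"
  shows "andrasfai_E k 0 (andrasfai_dist k a b)"
proof -
  have less: "a < 3*k-1" "andrasfai_dist k a b < 3*k-1"
    using andrasfai_E_less[OF assms] by (auto simp: andrasfai_dist_def)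
  have "andrasfai_E k ((0 + a) mod (3*k-1)) ((andrasfai_dist k a b + a) mod (3*k-1))"
    unfolding andrasfai_dist_add[OF assms] using assms less by simp
  moreover have "0 < 3*k-1" using less by simp
  ultimately show ?thesis using andrasfai_E_rotate less(2) by blast
qed

lemma andrasfai_E_dist_cases:
  assumes "andrasfai_E k a b"
  shows "andrasfai_dist k a b = 2*k-1 \<or> k < andrasfai_dist k a b \<or> andrasfai_dist k b a = 2*k-1"
proof -
  have "a < 3*k-1" "b < 3*k-1" "a \<noteq> b" using assms andrasfai_E_irrefl andrasfai_E_less by auto
  then have "andrasfai_dist k a b + andrasfai_dist k b a = 3*k-1"
    unfolding andrasfai_dist_def by (rule add_diff_mod_add_diff_mod)
  moreover have "k \<le> andrasfai_dist k a b"
    using andrasfai_E_0_dist[OF assms] by (auto simp: andrasfai_E_iff)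
  ultimately show ?thesis by linarith
qed

section \<open>Triangle-free graphs and twins\<close>

lemma maximal_triangle_free_common_neighbour:
  assumes "graph V E" "maximal_triangle_free V E" "x \<in> V" "y \<in> V" "x \<noteq> y" "\<not> E x y"
  shows "\<exists>w\<in>V. E x w \<and> E y w"
proof -
  have tf: "triangle_free V E" and "\<not> triangle_free V (add_edge E x y)"
    using assms unfolding maximal_triangle_free_def by auto
  then obtain a b c where abc: "a \<in> V" "b \<in> V" "c \<in> V"
    "add_edge E x y a b" "add_edge E x y b c" "add_edge E x y a c"
    unfolding triangle_free_def by blast
  have "\<And>a b. E a b \<Longrightarrow> E b a" and "\<And>a. \<not> E a a"
    using assms(1) by (auto simp: graph_def)
  then show ?thesis
    using abc tf assms(5) unfolding add_edge_def triangle_free_def by metis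
qed

lemma triangle_free_embedding_adj_iff:
  assumes graph: "graph VG EG" and tf: "triangle_free VG EG" and emb: "embedding VF EF VG EG \<phi>"
    and diam: "\<And>a b. a \<in> VF \<Longrightarrow> b \<in> VF \<Longrightarrow> a \<noteq> b \<Longrightarrow> \<not> EF a b \<Longrightarrow> \<exists>c\<in>VF. EF a c \<and> EF b c"
    and "a \<in> VF" "b \<in> VF"
  shows "EG (\<phi> a) (\<phi> b) \<longleftrightarrow> EF a b"
proof
  assume "EF a b"
  then show "EG (\<phi> a) (\<phi> b)" using emb \<open>a \<in> VF\<close> \<open>b \<in> VF\<close> by (simp add: embedding_def)
next
  assume e: "EG (\<phi> a) (\<phi> b)"
  show "EF a b"
  proof (rule ccontr)
    assume "\<not> EF a b"
    moreover have "a \<noteq> b" using e graph by (auto simp: graph_def)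
    ultimately obtain c where "c \<in> VF" "EF a c" "EF b c"
      using diam \<open>a \<in> VF\<close> \<open>b \<in> VF\<close> by blast
    then have "EG (\<phi> a) (\<phi> c)" "EG (\<phi> b) (\<phi> c)" "\<phi> a \<in> VG" "\<phi> b \<in> VG" "\<phi> c \<in> VG"
      using emb \<open>a \<in> VF\<close> \<open>b \<in> VF\<close> by (auto simp: embedding_def)
    then show False using e tf unfolding triangle_free_def by blast
  qed
qed

lemma twins_adjacent_if_mem:
  assumes "symp E" "x \<in> W" "y \<in> W" "E x y" "twin E W x q" "twin E W y z" "q \<in> W"
  shows "E q z"
proof -
  have "E q y" using assms(3-5) by (auto simp: twin_def)
  then have "E z q" using assms(1,6,7) by (auto simp: twin_def dest: sympD)
  then show ?thesis using sympD[OF assms(1)] by blast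
qed

lemma twins_of_adjacent_distinct:
  assumes "graph V E" "triangle_free V E" "x \<in> W" "y \<in> W" "E x y" "twin E W x q" "twin E W y z"
  shows "q \<noteq> z"
proof
  assume "q = z"
  have sym: "E a b \<Longrightarrow> E b a" for a b using assms(1) by (simp add: graph_def)
  have "E q y" using assms(4-6) by (auto simp: twin_def)
  moreover have "E q x" using assms(3,5,7) \<open>q = z\<close> sym by (auto simp: twin_def)
  moreover have "x \<in> V" "y \<in> V" "q \<in> V"
    using assms(1,5) \<open>E q x\<close> by (auto simp: graph_def)
  ultimately show False
    using assms(2,5) sym unfolding triangle_free_def by blast
qed

lemma induced_C6I:
  assumes "graph V E" "distinct [x0, x1, x2, x3, x4, x5]" "{x0, x1, x2, x3, x4, x5} \<subseteq> V"
    and "E x0 x1" "E x1 x2" "E x2 x3" "E x3 x4" "E x4 x5" "E x5 x0"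
    and "\<not> E x0 x2" "\<not> E x0 x3" "\<not> E x0 x4" "\<not> E x1 x3" "\<not> E x1 x4" "\<not> E x1 x5"
      "\<not> E x2 x4" "\<not> E x2 x5" "\<not> E x3 x5"
  shows "has_induced_C6 V E"
  unfolding has_induced_C6_def
proof (intro exI conjI)
  let ?xs = "[x0, x1, x2, x3, x4, x5]"
  have all6: "(\<forall>i<6. P i) \<longleftrightarrow> P 0 \<and> P 1 \<and> P 2 \<and> P 3 \<and> P 4 \<and> P 5" for P :: "nat \<Rightarrow> bool"
    by (simp add: numeral_eq_Suc All_less_Suc conj_ac)
  have sym: "E a b \<longleftrightarrow> E b a" and irrefl: "\<not> E a a" for a b
    using assms(1) by (auto simp: graph_def)
  show "inj_on ((!) ?xs) {0..<6}" using assms(2) by (intro inj_on_nth) auto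
  show "(!) ?xs ` {0..<6} \<subseteq> V"
  proof (rule image_subsetI)
    fix i :: nat assume "i \<in> {0..<6}"
    then have "?xs ! i \<in> set ?xs" by (intro nth_mem) simp
    then show "?xs ! i \<in> V" using assms(3) by auto
  qed
  show "\<forall>i<6. \<forall>j<6. E (?xs ! i) (?xs ! j) \<longleftrightarrow> (i + 1) mod 6 = j \<or> (j + 1) mod 6 = i"
    using assms(4-) unfolding all6 by (simp add: irrefl) (metis sym)
qed

locale andrasfai_embedding =
  fixes V :: "'a set" and E :: "'a \<Rightarrow> 'a \<Rightarrow> bool" and k :: nat and \<phi> :: "nat \<Rightarrow> 'a"
  assumes k_pos: "1 \<le> k" and graph: "graph V E" and triangle_free: "triangle_free V E"
    and embedding: "embedding (andrasfai_V k) (andrasfai_E k) V E \<phi>"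
begin

lemma E_sym: "E x y \<Longrightarrow> E y x"
  using graph by (simp add: graph_def)

lemma E_irrefl: "\<not> E x x"
  using graph by (simp add: graph_def)

lemma E_in_V: "E x y \<Longrightarrow> x \<in> V \<and> y \<in> V"
  using graph by (simp add: graph_def)

lemma no_triangle: "E x y \<Longrightarrow> E y z \<Longrightarrow> E x z \<Longrightarrow> False"
  using triangle_free E_in_V unfolding triangle_free_def by blast

lemma phi_in_V: "i < 3*k-1 \<Longrightarrow> \<phi> i \<in> V"
  using embedding by (auto simp: embedding_def andrasfai_V_def)

lemma phi_inj: "i < 3*k-1 \<Longrightarrow> j < 3*k-1 \<Longrightarrow> \<phi> i = \<phi> j \<Longrightarrow> i = j"
  using embedding by (auto simp: embedding_def andrasfai_V_def inj_on_def)

lemma phi_adj_iff: "i < 3*k-1 \<Longrightarrow> j < 3*k-1 \<Longrightarrow> E (\<phi> i) (\<phi> j) \<longleftrightarrow> andrasfai_E k i j"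
  using triangle_free_embedding_adj_iff[OF graph triangle_free embedding andrasfai_common_neighbour]
  by (simp add: andrasfai_V_def)

lemma phi_edge: "andrasfai_E k i j \<Longrightarrow> E (\<phi> i) (\<phi> j)"
  using phi_adj_iff andrasfai_E_less by blast

lemma twin_adj_iff:
  assumes "twin E (\<phi> ` andrasfai_V k) (\<phi> x) q" "x < 3*k-1" "i < 3*k-1"
  shows "E q (\<phi> i) \<longleftrightarrow> andrasfai_E k x i"
proof -
  have "\<phi> i \<in> \<phi> ` andrasfai_V k" using assms(3) by (simp add: andrasfai_V_def)
  then have "E q (\<phi> i) \<longleftrightarrow> E (\<phi> x) (\<phi> i)" using assms(1) unfolding twin_def by blast
  then show ?thesis using phi_adj_iff assms(2,3) by simp
qed

lemma rotate: "andrasfai_embedding V E k (\<lambda>i. \<phi> ((i + c) mod (3*k-1)))"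
  using k_pos graph triangle_free embedding_andrasfai_rotate(1)[OF embedding]
  by unfold_locales

lemma twins_distinct:
  assumes "andrasfai_E k x y"
    and "twin E (\<phi> ` andrasfai_V k) (\<phi> x) q" "twin E (\<phi> ` andrasfai_V k) (\<phi> y) z"
  shows "q \<noteq> z"
  using twins_of_adjacent_distinct[OF graph triangle_free _ _ phi_edge[OF assms(1)] assms(2,3)]
    andrasfai_E_less[OF assms(1)] by (simp add: andrasfai_V_def)

end

section \<open>Extending \<open>\<Gamma>\<^sub>k\<close> to \<open>\<Gamma>\<^bsub>k+1\<^esub>\<close>\<close>

text \<open>Deleting the vertices \<open>k\<close>, \<open>2k+1\<close> and \<open>3k+1\<close> of \<open>\<Gamma>\<^bsub>k+1\<^esub>\<close> and renumbering the others in
  order leaves \<open>\<Gamma>\<^sub>k\<close>. On this copy \<open>3k+1\<close> has the neighbourhood of \<open>0\<close>, \<open>2k+1\<close> that of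
  \<open>2k-1\<close>, and \<open>k\<close>, adjacent to both, has the neighbours \<open>2k, \<dots>, 3k-2\<close>.\<close>

definition andrasfai_retained :: "nat \<Rightarrow> nat \<Rightarrow> bool" where
  "andrasfai_retained k p \<longleftrightarrow> p < 3*k+2 \<and> p \<noteq> k \<and> p \<noteq> 2*k+1 \<and> p \<noteq> 3*k+1"

definition andrasfai_reindex :: "nat \<Rightarrow> nat \<Rightarrow> nat" where
  "andrasfai_reindex k p = (if p < k then p else if p \<le> 2*k then p - 1 else p - 2)"

lemma andrasfai_retained_or_new:
  "p < 3*k+2 \<Longrightarrow> p \<in> {k, 2*k+1, 3*k+1} \<or> andrasfai_retained k p"
  unfolding andrasfai_retained_def by auto

lemma andrasfai_reindex_less: "andrasfai_retained k p \<Longrightarrow> andrasfai_reindex k p < 3*k-1"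
  unfolding andrasfai_retained_def andrasfai_reindex_def by auto

lemma andrasfai_reindex_inj:
  "andrasfai_retained k p \<Longrightarrow> andrasfai_retained k p' \<Longrightarrow>
    andrasfai_reindex k p = andrasfai_reindex k p' \<Longrightarrow> p = p'"
  unfolding andrasfai_retained_def andrasfai_reindex_def by (auto split: if_splits)

lemma andrasfai_E_reindex:
  "andrasfai_retained k p \<Longrightarrow> andrasfai_retained k p' \<Longrightarrow> andrasfai_E (k+1) p p' \<Longrightarrow>
    andrasfai_E k (andrasfai_reindex k p) (andrasfai_reindex k p')"
  unfolding andrasfai_retained_def andrasfai_reindex_def andrasfai_E_iff
  by (cases "p < k"; cases "p \<le> 2*k"; cases "p' < k"; cases "p' \<le> 2*k") (simp_all, linarith+)

lemma andrasfai_E_Suc_k: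
  "andrasfai_E (k+1) k p \<Longrightarrow> andrasfai_retained k p \<Longrightarrow> 2*k \<le> andrasfai_reindex k p"
  unfolding andrasfai_retained_def andrasfai_reindex_def andrasfai_E_iff by auto

lemma andrasfai_E_Suc_2k:
  "1 \<le> k \<Longrightarrow> andrasfai_E (k+1) (2*k+1) p \<Longrightarrow> andrasfai_retained k p \<Longrightarrow>
    andrasfai_E k (2*k-1) (andrasfai_reindex k p)"
  unfolding andrasfai_retained_def andrasfai_reindex_def andrasfai_E_iff by auto

lemma andrasfai_E_Suc_3k:
  "andrasfai_E (k+1) (3*k+1) p \<Longrightarrow> andrasfai_retained k p \<Longrightarrow>
    andrasfai_E k 0 (andrasfai_reindex k p)"
  unfolding andrasfai_retained_def andrasfai_reindex_def andrasfai_E_iff by auto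

lemma andrasfai_E_Suc_new_vertices:
  "p \<in> {k, 2*k+1, 3*k+1} \<Longrightarrow> p' \<in> {k, 2*k+1, 3*k+1} \<Longrightarrow> andrasfai_E (k+1) p p' \<Longrightarrow>
    k \<in> {p, p'}"
  unfolding andrasfai_E_iff by auto

definition andrasfai_extend :: "nat \<Rightarrow> (nat \<Rightarrow> 'a) \<Rightarrow> 'a \<Rightarrow> 'a \<Rightarrow> 'a \<Rightarrow> nat \<Rightarrow> 'a" where
  "andrasfai_extend k \<phi> q z w p =
    (if p = k then w else if p = 2*k+1 then z else if p = 3*k+1 then q
     else \<phi> (andrasfai_reindex k p))"

locale andrasfai_extension =
  fixes V :: "'a set" and E :: "'a \<Rightarrow> 'a \<Rightarrow> bool" and k :: nat and \<phi> :: "nat \<Rightarrow> 'a"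
    and q z w :: 'a
  assumes graph: "graph V E" and k_pos: "1 \<le> k"
    and embedding: "embedding (andrasfai_V k) (andrasfai_E k) V E \<phi>"
    and distinct: "distinct [q, z, w]" and outside: "{q, z, w} \<inter> \<phi> ` andrasfai_V k = {}"
    and wq: "E w q" and wz: "E w z"
    and q_adj: "\<And>i. andrasfai_E k 0 i \<Longrightarrow> E q (\<phi> i)"
    and z_adj: "\<And>i. andrasfai_E k (2*k-1) i \<Longrightarrow> E z (\<phi> i)"
    and w_adj: "\<And>i. 2*k \<le> i \<Longrightarrow> i < 3*k-1 \<Longrightarrow> E w (\<phi> i)"
begin

abbreviation \<psi> :: "nat \<Rightarrow> 'a" where
  "\<psi> \<equiv> andrasfai_extend k \<phi> q z w"

lemma E_sym: "E x y \<Longrightarrow> E y x"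
  using graph by (simp add: graph_def)

lemma phi_edge: "andrasfai_E k i j \<Longrightarrow> E (\<phi> i) (\<phi> j)"
  using embedding andrasfai_E_less by (auto simp: embedding_def andrasfai_V_def)

lemma extend_new: "\<psi> k = w" "\<psi> (2*k+1) = z" "\<psi> (3*k+1) = q"
  using k_pos by (simp_all add: andrasfai_extend_def)

lemma extend_retained:
  "andrasfai_retained k p \<Longrightarrow> \<psi> p = \<phi> (andrasfai_reindex k p)"
  by (auto simp: andrasfai_extend_def andrasfai_retained_def)

lemma extend_retained_in_image:
  "andrasfai_retained k p \<Longrightarrow> \<psi> p \<in> \<phi> ` andrasfai_V k"
  using extend_retained andrasfai_reindex_less by (simp add: andrasfai_V_def)

lemma extend_edge_from_new:
  assumes p: "p \<in> {k, 2*k+1, 3*k+1}" and p': "p' < 3*k+2" and adj: "andrasfai_E (k+1) p p'"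
  shows "E (\<psi> p) (\<psi> p')"
proof (cases "andrasfai_retained k p'")
  case True
  have less: "andrasfai_reindex k p' < 3*k-1" using andrasfai_reindex_less[OF True] .
  consider "p = k" | "p = 2*k+1" | "p = 3*k+1" using p by blast
  then show ?thesis
  proof cases
    case 1
    then show ?thesis
      using w_adj[OF andrasfai_E_Suc_k[OF _ True] less] adj extend_new extend_retained[OF True] by simp
  next
    case 2
    then show ?thesis
      using z_adj[OF andrasfai_E_Suc_2k[OF k_pos _ True]] adj extend_new extend_retained[OF True] by simp
  next
    case 3
    then show ?thesis
      using q_adj[OF andrasfai_E_Suc_3k[OF _ True]] adj extend_new extend_retained[OF True] by simp
  qed
next
  case False
  then have "p' \<in> {k, 2*k+1, 3*k+1}" using p' andrasfai_retained_or_new by blast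
  moreover have "k \<in> {p, p'}" using p adj calculation andrasfai_E_Suc_new_vertices by blast
  ultimately show ?thesis
    using p adj extend_new wq wz E_sym andrasfai_E_irrefl by auto
qed

lemma inj_on_extend: "inj_on \<psi> (andrasfai_V (k+1))"
proof (rule inj_onI)
  fix p p' assume "p \<in> andrasfai_V (k+1)" "p' \<in> andrasfai_V (k+1)" and eq: "\<psi> p = \<psi> p'"
  then consider "p \<in> {k, 2*k+1, 3*k+1}" "p' \<in> {k, 2*k+1, 3*k+1}"
    | "andrasfai_retained k p" "p' \<in> {k, 2*k+1, 3*k+1}"
    | "p \<in> {k, 2*k+1, 3*k+1}" "andrasfai_retained k p'"
    | "andrasfai_retained k p" "andrasfai_retained k p'"
    using andrasfai_retained_or_new by (auto simp: andrasfai_V_def)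
  then show "p = p'"
  proof cases
    case 1
    then show ?thesis using eq extend_new distinct by auto
  next
    case 2
    then show ?thesis using eq extend_new extend_retained_in_image[OF 2(1)] outside by auto
  next
    case 3
    then show ?thesis using eq extend_new extend_retained_in_image[OF 3(2)] outside by auto
  next
    case 4
    then show ?thesis
      using eq extend_retained andrasfai_reindex_inj andrasfai_reindex_less embedding
      by (auto simp: embedding_def inj_on_def andrasfai_V_def)
  qed
qed

lemma extend_in_V: "\<psi> ` andrasfai_V (k+1) \<subseteq> V"
proof (rule image_subsetI)
  fix p assume "p \<in> andrasfai_V (k+1)"
  then consider "p \<in> {k, 2*k+1, 3*k+1}" | "andrasfai_retained k p"
    using andrasfai_retained_or_new by (auto simp: andrasfai_V_def)
  then show "\<psi> p \<in> V"
  proof cases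
    case 1
    moreover have "q \<in> V" "z \<in> V" "w \<in> V" using wq wz graph by (auto simp: graph_def)
    ultimately show ?thesis using extend_new by auto
  next
    case 2
    then show ?thesis using extend_retained_in_image embedding by (auto simp: embedding_def)
  qed
qed

lemma extend_edge:
  assumes "p < 3*k+2" "p' < 3*k+2" "andrasfai_E (k+1) p p'"
  shows "E (\<psi> p) (\<psi> p')"
proof -
  consider "p \<in> {k, 2*k+1, 3*k+1}" | "p' \<in> {k, 2*k+1, 3*k+1}"
    | "andrasfai_retained k p" "andrasfai_retained k p'"
    using andrasfai_retained_or_new assms(1,2) by blast
  then show ?thesis
  proof cases
    case 1
    then show ?thesis using extend_edge_from_new assms(2,3) by blast
  next
    case 2
    then show ?thesis using extend_edge_from_new assms(1,3) andrasfai_E_sym E_sym by blast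
  next
    case 3
    then show ?thesis
      using phi_edge andrasfai_E_reindex[OF 3 assms(3)] extend_retained by simp
  qed
qed

lemma embedding_extend: "embedding (andrasfai_V (k+1)) (andrasfai_E (k+1)) V E \<psi>"
  using inj_on_extend extend_in_V extend_edge by (simp add: embedding_def andrasfai_V_def)

end

section \<open>Twins of the ends of an edge\<close>

locale nonadjacent_twins = andrasfai_embedding +
  fixes d :: nat and q z w :: 'a
  assumes d_adj: "andrasfai_E k 0 d"
    and q_twin: "twin E (\<phi> ` andrasfai_V k) (\<phi> 0) q"
    and z_twin: "twin E (\<phi> ` andrasfai_V k) (\<phi> d) z"
    and q_outside: "q \<notin> \<phi> ` andrasfai_V k" and z_outside: "z \<notin> \<phi> ` andrasfai_V k"
    and not_qz: "\<not> E q z" and qw: "E q w" and zw: "E z w"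
    and no_C6: "\<not> has_induced_C6 V E"
begin

lemma q_adj_iff: "i < 3*k-1 \<Longrightarrow> E q (\<phi> i) \<longleftrightarrow> andrasfai_E k 0 i"
  using twin_adj_iff[OF q_twin] k_pos by simp

lemma z_adj_iff: "i < 3*k-1 \<Longrightarrow> E z (\<phi> i) \<longleftrightarrow> andrasfai_E k d i"
  using twin_adj_iff[OF z_twin] andrasfai_E_less[OF d_adj] by simp

lemma w_outside: "w \<notin> \<phi> ` andrasfai_V k"
proof
  assume "w \<in> \<phi> ` andrasfai_V k"
  then obtain j where "j < 3*k-1" "w = \<phi> j" by (auto simp: andrasfai_V_def)
  then have "andrasfai_E k 0 j" "andrasfai_E k d j" using q_adj_iff z_adj_iff qw zw by auto
  then show False using d_adj phi_edge no_triangle by blast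
qed

text \<open>Otherwise \<open>q w z \<phi>u' \<phi>j \<phi>u\<close> is an induced six-cycle.\<close>

lemma w_adj_by_C6_free:
  assumes "andrasfai_E k j u" "andrasfai_E k j u'" "andrasfai_E k 0 u" "andrasfai_E k d u'"
    and "\<not> andrasfai_E k 0 j" "\<not> andrasfai_E k d j" "\<not> andrasfai_E k 0 u'" "\<not> andrasfai_E k d u"
  shows "E w (\<phi> j)"
proof (rule ccontr)
  assume not_wj: "\<not> E w (\<phi> j)"
  have less: "j < 3*k-1" "u < 3*k-1" "u' < 3*k-1" using assms(1,2) andrasfai_E_less by auto
  have "u' \<noteq> j" "j \<noteq> u" "u \<noteq> u'" using assms(1,2,3,7) andrasfai_E_irrefl by auto
  then have distinct: "distinct [q, w, z, \<phi> u', \<phi> j, \<phi> u]"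
    using phi_inj less q_outside z_outside w_outside twins_distinct[OF d_adj q_twin z_twin] qw zw
      E_irrefl by (auto simp: andrasfai_V_def)
  have in_V: "{q, w, z, \<phi> u', \<phi> j, \<phi> u} \<subseteq> V" using qw zw E_in_V phi_in_V less by auto
  have cycle: "E q w" "E w z" "E z (\<phi> u')" "E (\<phi> u') (\<phi> j)" "E (\<phi> j) (\<phi> u)" "E (\<phi> u) q"
    using qw E_sym[OF zw] z_adj_iff[of u'] q_adj_iff[of u] assms(1-4) less
      phi_edge[of u' j] phi_edge[of j u] andrasfai_E_sym[of k j u'] E_sym[of q "\<phi> u"] by simp_all
  have triangle_chords: "\<not> E w (\<phi> u')" "\<not> E w (\<phi> u)" "\<not> E (\<phi> u') (\<phi> u)"
    using cycle no_triangle E_sym by meson+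
  have "has_induced_C6 V E"
    by (rule induced_C6I[OF graph distinct in_V cycle not_qz])
      (use not_wj triangle_chords assms(5-8) q_adj_iff z_adj_iff less in auto)
  then show False using no_C6 by simp
qed

text \<open>Here \<open>w\<close> is forced to be adjacent to both ends of the edge \<open>\<phi>(k-1) \<phi>(2k)\<close>.\<close>

lemma no_middle_distance:
  assumes "k + 1 \<le> d" "d + 2 \<le> 2*k"
  shows False
proof -
  define m where "m = k - 3"
  have k: "k = m + 3" using assms unfolding m_def by linarith
  have "d < 3*m + 8" using andrasfai_E_less[OF d_adj] k by simp
  have "E w (\<phi> (m+2))"
    by (rule w_adj_by_C6_free[of "m+2" "2*m+5" "3*m+7"])
      (use assms k \<open>d < 3*m + 8\<close> in \<open>simp_all add: andrasfai_E_iff\<close>)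
  moreover have "E w (\<phi> (2*m+6))"
    by (rule w_adj_by_C6_free[of "2*m+6" "m+3" 1])
      (use assms k \<open>d < 3*m + 8\<close> in \<open>simp_all add: andrasfai_E_iff\<close>)
  moreover have "andrasfai_E k (m+2) (2*m+6)" unfolding andrasfai_E_iff k by simp
  ultimately show False using phi_edge no_triangle by blast
qed

lemma w_adj_far:
  assumes "d = 2*k-1" "2*k \<le> j" "j < 3*k-1"
  shows "E w (\<phi> j)"
  by (rule w_adj_by_C6_free[of j "j-k" "j-2*k+1"]) (use assms in \<open>auto simp: andrasfai_E_iff\<close>)

lemma contains_andrasfai_Suc_if_far:
  assumes "d = 2*k-1"
  shows "contains_subgraph V E (andrasfai_V (k+1)) (andrasfai_E (k+1))"
proof -
  interpret extension: andrasfai_extension V E k \<phi> q z w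
  proof unfold_locales
    show "graph V E" "1 \<le> k" "embedding (andrasfai_V k) (andrasfai_E k) V E \<phi>"
      by (fact graph k_pos embedding)+
    show "distinct [q, z, w]"
      using twins_distinct[OF d_adj q_twin z_twin] qw zw E_irrefl by auto
    show "{q, z, w} \<inter> \<phi> ` andrasfai_V k = {}" using q_outside z_outside w_outside by auto
    show "E w q" "E w z" using qw zw E_sym by auto
    show "E q (\<phi> i)" if "andrasfai_E k 0 i" for i
      using that q_adj_iff andrasfai_E_less by blast
    show "E z (\<phi> i)" if "andrasfai_E k (2*k-1) i" for i
      using that assms z_adj_iff andrasfai_E_less by blast
    show "E w (\<phi> i)" if "2*k \<le> i" "i < 3*k-1" for i
      using that assms w_adj_far by blast
  qed
  show ?thesis unfolding contains_subgraph_def using extension.embedding_extend by blast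
qed

end

lemma (in andrasfai_embedding) twins_adjacent_at_0:
  assumes mtf: "maximal_triangle_free V E" and no_C6: "\<not> has_induced_C6 V E"
    and no_next: "\<not> contains_subgraph V E (andrasfai_V (k+1)) (andrasfai_E (k+1))"
    and d: "andrasfai_E k 0 d" "d = 2*k-1 \<or> k < d"
    and "q \<in> V" "z \<in> V"
    and q_twin: "twin E (\<phi> ` andrasfai_V k) (\<phi> 0) q"
    and z_twin: "twin E (\<phi> ` andrasfai_V k) (\<phi> d) z"
  shows "E q z"
proof (rule ccontr)
  assume not_qz: "\<not> E q z"
  have in_image: "\<phi> 0 \<in> \<phi> ` andrasfai_V k" "\<phi> d \<in> \<phi> ` andrasfai_V k"
    using andrasfai_E_less[OF d(1)] by (auto simp: andrasfai_V_def)
  have "symp E" by (simp add: E_sym sympI)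
  then have "q \<notin> \<phi> ` andrasfai_V k" "z \<notin> \<phi> ` andrasfai_V k"
    using twins_adjacent_if_mem[OF _ in_image phi_edge[OF d(1)] q_twin z_twin]
      twins_adjacent_if_mem[OF _ in_image(2,1) E_sym[OF phi_edge[OF d(1)]] z_twin q_twin]
      not_qz E_sym by blast+
  moreover obtain w where "E q w" "E z w"
    using maximal_triangle_free_common_neighbour[OF graph mtf \<open>q \<in> V\<close> \<open>z \<in> V\<close>
        twins_distinct[OF d(1) q_twin z_twin] not_qz] by blast
  ultimately interpret nonadjacent_twins V E k \<phi> d q z w
    using d(1) q_twin z_twin not_qz no_C6 by unfold_locales
  have "d + 1 \<le> 2*k" using d(1) k_pos by (simp add: andrasfai_E_iff)
  with d(2) consider "d = 2*k-1" | "k + 1 \<le> d" "d + 2 \<le> 2*k" by linarith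
  then show False using no_middle_distance contains_andrasfai_Suc_if_far no_next by cases auto
qed

lemma (in andrasfai_embedding) twins_adjacent_of_edge:
  assumes mtf: "maximal_triangle_free V E" and no_C6: "\<not> has_induced_C6 V E"
    and no_next: "\<not> contains_subgraph V E (andrasfai_V (k+1)) (andrasfai_E (k+1))"
    and ab: "andrasfai_E k a b"
    and d: "andrasfai_dist k a b = 2*k-1 \<or> k < andrasfai_dist k a b"
    and "q \<in> V" "z \<in> V"
    and q_twin: "twin E (\<phi> ` andrasfai_V k) (\<phi> a) q"
    and z_twin: "twin E (\<phi> ` andrasfai_V k) (\<phi> b) z"
  shows "E q z"
proof -
  interpret rotated: andrasfai_embedding V E k "\<lambda>i. \<phi> ((i + a) mod (3*k-1))"
    by (rule rotate)
  have "(\<lambda>i. \<phi> ((i + a) mod (3*k-1))) ` andrasfai_V k = \<phi> ` andrasfai_V k"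
    by (rule embedding_andrasfai_rotate(2)[OF embedding])
  moreover have "\<phi> ((0 + a) mod (3*k-1)) = \<phi> a" using andrasfai_E_less[OF ab] by simp
  ultimately show ?thesis
    using rotated.twins_adjacent_at_0[OF mtf no_C6 no_next andrasfai_E_0_dist[OF ab] d]
      andrasfai_dist_add[OF ab] \<open>q \<in> V\<close> \<open>z \<in> V\<close> q_twin z_twin by simp
qed

theorem lemma3p3:
  fixes V :: "'a set" and E :: "'a \<Rightarrow> 'a \<Rightarrow> bool" and k :: nat
  assumes "k \<ge> 1"
    and "classA V E"
    and "\<not> contains_subgraph V E (andrasfai_V (k+1)) (andrasfai_E (k+1))"
  shows "twin_property (andrasfai_V k) (andrasfai_E k) V E"
  unfolding twin_property_def
proof (intro ballI allI impI)
  fix a b \<phi> q z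
  assume ab: "andrasfai_E k a b" and emb: "embedding (andrasfai_V k) (andrasfai_E k) V E \<phi>"
    and "q \<in> V" "z \<in> V"
    and twins: "twin E (\<phi> ` andrasfai_V k) (\<phi> a) q" "twin E (\<phi> ` andrasfai_V k) (\<phi> b) z"
  have G: "graph V E" "maximal_triangle_free V E" "\<not> has_induced_C6 V E"
    using assms(2) by (auto simp: classA_def)
  then have "triangle_free V E" by (simp add: maximal_triangle_free_def)
  then interpret andrasfai_embedding V E k \<phi>
    using assms(1) G(1) emb by unfold_locales
  have ba: "andrasfai_E k b a" using ab andrasfai_E_sym by blast
  consider "andrasfai_dist k a b = 2*k-1 \<or> k < andrasfai_dist k a b"
    | "andrasfai_dist k b a = 2*k-1"
    using andrasfai_E_dist_cases[OF ab] by blast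
  then show "E q z"
  proof cases
    case 1
    then show ?thesis
      using twins_adjacent_of_edge[OF G(2,3) assms(3) ab] \<open>q \<in> V\<close> \<open>z \<in> V\<close> twins by blast
  next
    case 2
    then have "E z q"
      using twins_adjacent_of_edge[OF G(2,3) assms(3) ba] \<open>q \<in> V\<close> \<open>z \<in> V\<close> twins by blast
    then show ?thesis by (rule E_sym)
  qed
qed

end
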